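(* Let $d\ge1$. Let $G_A=(V_A,E_A)$ with configuration $\mathbf{p}^A$ and $G_B=(V_B,E_B)$ with configuration $\mathbf{p}^B$ be frameworks in general position in $\mathbb{R}^d$, with $V_C=V_A\cap V_B$ a proper subset of both $V_A$ and $V_B$, $n=|V_C|\ge d+1$, and $\mathbf{p}^A_i=\mathbf{p}^B_i$ for $i\in V_C$. Let $\Omega_A$ (indexed by $V_A$) and $\Omega_B$ (indexed by $V_B$) be positive semidefinite stress matrices of nullity $d+1$ of $G_A(\mathbf{p}^A)$ and $G_B(\mathbf{p}^B)$ respectively. Let $V=V_A\cup V_B$ and let $\widetilde\Omega_A$, $\widetilde\Omega_B$ be the $V\times V$ matrices obtained by extending $\Omega_A$, $\Omega_B$ by zeros, i.e. $(\widetilde\Omega_A)_{ij}=(\Omega_A)_{ij}$ if $i,j\in V_A$ and $0$ otherwise, and similarly for $B$. Then $\widetilde\Omega=\widetilde\Omega_A+\widetilde\Omega_B$ is a positive semidefinite stress matrix of nullity $d+1$ of the framework attachment, i.e. of the framework with graph $(V,E_A\cup E_B)$ and configuration $\mathbf{p}$ where $\mathbf{p}_i=\mathbf{p}^A_i$ for $i\in V_A$, $\mathbf{p}_i=\mathbf{p}^B_i$ for $i\in V_B$.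
   Context: A framework $G(\mathbf{p})$ in $\mathbb{R}^d$ is a finite graph $G=(V,E)$ with points $\mathbf{p}_i\in\mathbb{R}^d$; it is in general position if any $d+1$ distinct vertices have affinely independent points. A stress matrix of $G(\mathbf{p})$ is a real $|V|\times|V|$ matrix $\Omega$ with: $\Omega_{ij}=\Omega_{ji}$; $\Omega_{ij}=0$ whenever $i\ne j$ and $\{i,j\}\notin E$; $\sum_{j}\Omega_{ij}=0$ for all $i$; $\sum_j\Omega_{ij}\mathbf{p}_j=0$ for all $i$. Its nullity is $\dim\ker\Omega$. *)

theory Defs
  imports "HOL-Analysis.Analysis"
begin

(* A "V x V matrix" is a function
   'v => 'v => real of which only the entries on V x V matter. *)

definition is_graph :: "'v set \<Rightarrow> 'v set set \<Rightarrow> bool" where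
  "is_graph V E \<longleftrightarrow> finite V \<and> (\<forall>e\<in>E. \<exists>i j. e = {i, j} \<and> i \<noteq> j \<and> i \<in> V \<and> j \<in> V)"

definition general_position :: "'v set \<Rightarrow> ('v \<Rightarrow> real^'d) \<Rightarrow> bool" where
  "general_position V p \<longleftrightarrow>
     (\<forall>S\<subseteq>V. card S = CARD('d) + 1 \<longrightarrow> inj_on p S \<and> \<not> affine_dependent (p ` S))"

definition is_stress_matrix ::
  "'v set \<Rightarrow> 'v set set \<Rightarrow> ('v \<Rightarrow> real^'d) \<Rightarrow> ('v \<Rightarrow> 'v \<Rightarrow> real) \<Rightarrow> bool" where
  "is_stress_matrix V E p \<Omega> \<longleftrightarrow>
     (\<forall>i\<in>V. \<forall>j\<in>V. \<Omega> i j = \<Omega> j i) \<and>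
     (\<forall>i\<in>V. \<forall>j\<in>V. i \<noteq> j \<and> {i, j} \<notin> E \<longrightarrow> \<Omega> i j = 0) \<and>
     (\<forall>i\<in>V. (\<Sum>j\<in>V. \<Omega> i j) = 0) \<and>
     (\<forall>i\<in>V. (\<Sum>j\<in>V. \<Omega> i j *\<^sub>R p j) = 0)"

definition psd_on :: "'v set \<Rightarrow> ('v \<Rightarrow> 'v \<Rightarrow> real) \<Rightarrow> bool" where
  "psd_on V \<Omega> \<longleftrightarrow> (\<forall>x :: 'v \<Rightarrow> real. 0 \<le> (\<Sum>i\<in>V. \<Sum>j\<in>V. x i * \<Omega> i j * x j))"

definition kernel_on :: "'v::finite set \<Rightarrow> ('v \<Rightarrow> 'v \<Rightarrow> real) \<Rightarrow> (real^'v) set" where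
  "kernel_on V \<Omega> = {x. (\<forall>i. i \<notin> V \<longrightarrow> x $ i = 0) \<and> (\<forall>i\<in>V. (\<Sum>j\<in>V. \<Omega> i j * x $ j) = 0)}"

definition nullity_on :: "'v::finite set \<Rightarrow> ('v \<Rightarrow> 'v \<Rightarrow> real) \<Rightarrow> nat" where
  "nullity_on V \<Omega> = dim (kernel_on V \<Omega>)"

definition extend_zero :: "'v set \<Rightarrow> ('v \<Rightarrow> 'v \<Rightarrow> real) \<Rightarrow> 'v \<Rightarrow> 'v \<Rightarrow> real" where
  "extend_zero W \<Omega> = (\<lambda>i j. if i \<in> W \<and> j \<in> W then \<Omega> i j else 0)"

end

theory Submission
  imports Defs
begin

(* The kernel of a stress matrix always contains the vectors (a \<bullet> p i + c)_i of values of
   affine functions at the points. If d + 1 of the points are affinely independent, these vectors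
   form a (d + 1)-dimensional space, so nullity d + 1 means that the kernel is exactly this space.
   The zero extensions of the two PSD stresses are PSD, so for x in the kernel of their sum both
   quadratic forms vanish at x, which puts x in both kernels: x is affine on V_A and on V_B.
   The two affine functions agree on d + 1 affinely independent common vertices, hence coincide,
   and the kernel of the sum is again the space of affine functions, now on V_A \<union> V_B. *)

definition affine_values :: "'v::finite set \<Rightarrow> ('v \<Rightarrow> 'a::real_inner) \<Rightarrow> 'a \<times> real \<Rightarrow> real^'v" where
  "affine_values W p z = (\<chi> i. if i \<in> W then fst z \<bullet> p i + snd z else 0)"

lemma linear_affine_values: "linear (affine_values W p)"
  by (rule linearI) (auto simp: affine_values_def vec_eq_iff inner_add_left algebra_simps)

lemma affine_function_zero_on_spanning_set:
  fixes T :: "'a::real_inner set"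
  assumes hull: "affine hull T = UNIV" and zero: "\<forall>x\<in>T. a \<bullet> x + c = 0"
  shows "a = 0 \<and> c = 0"
proof -
  have "T \<subseteq> {x. a \<bullet> x = - c}" using zero by (auto simp: algebra_simps)
  then have "affine hull T \<subseteq> {x. a \<bullet> x = - c}"
    by (rule hull_minimal) (rule affine_hyperplane)
  then have on_UNIV: "a \<bullet> x = - c" for x using hull by auto
  have "c = 0" using on_UNIV[of 0] by simp
  moreover have "a = 0" using on_UNIV[of a] \<open>c = 0\<close> by simp
  ultimately show ?thesis by simp
qed

lemma affine_coefficients_unique:
  assumes hull: "affine hull (p ` S) = UNIV"
    and eq: "\<forall>i\<in>S. fst z \<bullet> p i + snd z = fst z' \<bullet> p i + snd z'"
  shows "z = z'"
proof -
  have "\<forall>x\<in>p ` S. (fst z - fst z') \<bullet> x + (snd z - snd z') = 0"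
    using eq by (auto simp: inner_diff_left)
  then show ?thesis
    using affine_function_zero_on_spanning_set[OF hull, of "fst z - fst z'" "snd z - snd z'"]
    by (simp add: prod_eq_iff)
qed

lemma inj_affine_values:
  assumes "S \<subseteq> W" and "affine hull (p ` S) = UNIV"
  shows "inj (affine_values W p)"
proof (rule injI)
  fix z z' assume eq: "affine_values W p z = affine_values W p z'"
  have "fst z \<bullet> p i + snd z = fst z' \<bullet> p i + snd z'" if "i \<in> S" for i
    using arg_cong[OF eq, of "\<lambda>x. x $ i"] that assms(1) by (auto simp: affine_values_def)
  then show "z = z'" using affine_coefficients_unique[OF assms(2)] by blast
qed

lemma dim_range_affine_values:
  fixes p :: "'v::finite \<Rightarrow> 'a::euclidean_space"
  assumes "S \<subseteq> W" and "affine hull (p ` S) = UNIV"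
  shows "dim (range (affine_values W p)) = DIM('a) + 1"
proof -
  have "dim (range (affine_values W p)) = dim (UNIV :: ('a \<times> real) set)"
    using inj_affine_values[OF assms] by (intro dim_image_eq linear_affine_values) (auto simp: inj_on_def inj_def)
  then show ?thesis by simp
qed

lemma general_position_affine_hull_eq_UNIV:
  fixes p :: "'v \<Rightarrow> real^'d"
  assumes "general_position V p" and "S \<subseteq> V" and "card S = CARD('d) + 1"
  shows "affine hull (p ` S) = UNIV"
proof -
  have "inj_on p S" and indep: "\<not> affine_dependent (p ` S)"
    using assms unfolding general_position_def by auto
  then have "card (p ` S) = CARD('d) + 1" using assms(3) by (simp add: card_image)
  then have "aff_dim (p ` S) = int CARD('d)"
    using aff_dim_affine_independent[OF indep] by simp
  then show ?thesis using aff_dim_eq_full[of "p ` S"] by simp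
qed

lemma general_position_cong:
  assumes "\<forall>i\<in>V. p i = q i"
  shows "general_position V p \<longleftrightarrow> general_position V q"
proof -
  have "inj_on p S \<longleftrightarrow> inj_on q S" and "p ` S = q ` S" if "S \<subseteq> V" for S
    using assms that by (auto intro!: inj_on_cong image_cong)
  then show ?thesis by (simp add: general_position_def)
qed

lemma subspace_kernel_on: "subspace (kernel_on W M)"
  unfolding subspace_def kernel_on_def
  by (auto simp: sum.distrib algebra_simps sum_distrib_left[symmetric])

lemma is_stress_matrix_symmetric:
  assumes "is_stress_matrix W E p M"
  shows "\<forall>i\<in>W. \<forall>j\<in>W. M i j = M j i"
  using assms unfolding is_stress_matrix_def by (rule conjunct1)

lemma is_stress_matrix_cong:
  assumes "\<forall>i\<in>W. p i = q i"
  shows "is_stress_matrix W E p M \<longleftrightarrow> is_stress_matrix W E q M"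
proof -
  have "(\<Sum>j\<in>W. M i j *\<^sub>R p j) = (\<Sum>j\<in>W. M i j *\<^sub>R q j)" for i
    using assms by (intro sum.cong) auto
  then show ?thesis by (simp add: is_stress_matrix_def)
qed

lemma stress_matrix_annihilates_affine_function:
  assumes st: "is_stress_matrix W E p M" and i: "i \<in> W"
  shows "(\<Sum>j\<in>W. M i j * (a \<bullet> p j + c)) = 0"
proof -
  have "(\<Sum>j\<in>W. M i j * (a \<bullet> p j + c)) = a \<bullet> (\<Sum>j\<in>W. M i j *\<^sub>R p j) + (\<Sum>j\<in>W. M i j) * c"
    by (simp add: algebra_simps sum.distrib inner_sum_right sum_distrib_left)
  also have "\<dots> = 0"
  proof -
    have "(\<Sum>j\<in>W. M i j *\<^sub>R p j) = 0" and "(\<Sum>j\<in>W. M i j) = 0"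
      using st i unfolding is_stress_matrix_def by blast+
    then show ?thesis by simp
  qed
  finally show ?thesis .
qed

lemma range_affine_values_subset_kernel_on:
  assumes "is_stress_matrix W E p M"
  shows "range (affine_values W p) \<subseteq> kernel_on W M"
  using stress_matrix_annihilates_affine_function[OF assms]
  by (auto simp: kernel_on_def affine_values_def cong: sum.cong)

lemma kernel_on_eq_range_affine_values:
  fixes p :: "'v::finite \<Rightarrow> real^'d"
  assumes st: "is_stress_matrix W E p M" and nullity: "nullity_on W M = CARD('d) + 1"
    and "S \<subseteq> W" and "affine hull (p ` S) = UNIV"
  shows "kernel_on W M = range (affine_values W p)"
proof (rule subspace_dim_equal[OF _ subspace_kernel_on range_affine_values_subset_kernel_on[OF st], symmetric])
  show "subspace (range (affine_values W p))"
    by (intro linear_subspace_image linear_affine_values subspace_UNIV)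
  show "dim (kernel_on W M) \<le> dim (range (affine_values W p))"
    using dim_range_affine_values[OF assms(3,4)] nullity unfolding nullity_on_def by simp
qed

lemma nonneg_quadratic_linear_coeff_zero:
  fixes b q :: real
  assumes nonneg: "\<And>t. 0 \<le> b * t + q * t\<^sup>2"
  shows "b = 0"
proof (rule ccontr)
  assume "b \<noteq> 0"
  show False
  proof (cases "q > 0")
    case True
    have "b * (- b / (2 * q)) + q * (- b / (2 * q))\<^sup>2 = - b\<^sup>2 / (4 * q)"
      using True by (simp add: field_simps power2_eq_square)
    also have "\<dots> < 0" using True \<open>b \<noteq> 0\<close> by (simp add: divide_neg_pos)
    finally show False using nonneg[of "- b / (2 * q)"] by linarith
  next
    case False
    then have "q * (- b)\<^sup>2 \<le> 0" by (simp add: mult_nonpos_nonneg)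
    moreover have "b * (- b) = - b\<^sup>2" by (simp add: power2_eq_square)
    moreover have "0 < b\<^sup>2" using \<open>b \<noteq> 0\<close> by simp
    ultimately show False using nonneg[of "- b"] by linarith
  qed
qed

lemma quadratic_form_add_scaled:
  fixes x y :: "'v \<Rightarrow> real"
  assumes sym: "\<forall>i\<in>W. \<forall>j\<in>W. M i j = M j i"
  shows "(\<Sum>i\<in>W. \<Sum>j\<in>W. (x i + t * y i) * M i j * (x j + t * y j)) =
      (\<Sum>i\<in>W. \<Sum>j\<in>W. x i * M i j * x j) + 2 * (\<Sum>i\<in>W. y i * (\<Sum>j\<in>W. M i j * x j)) * t
      + (\<Sum>i\<in>W. \<Sum>j\<in>W. y i * M i j * y j) * t\<^sup>2"
proof -
  have "(\<Sum>i\<in>W. \<Sum>j\<in>W. (x i + t * y i) * M i j * (x j + t * y j)) =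
      (\<Sum>i\<in>W. \<Sum>j\<in>W. x i * M i j * x j) + (\<Sum>i\<in>W. \<Sum>j\<in>W. x i * M i j * y j) * t
      + (\<Sum>i\<in>W. \<Sum>j\<in>W. y i * M i j * x j) * t + (\<Sum>i\<in>W. \<Sum>j\<in>W. y i * M i j * y j) * t\<^sup>2"
    by (simp add: algebra_simps power2_eq_square sum.distrib sum_distrib_left)
  moreover have "(\<Sum>i\<in>W. \<Sum>j\<in>W. x i * M i j * y j) = (\<Sum>i\<in>W. \<Sum>j\<in>W. y i * M i j * x j)"
    using sym by (subst sum.swap) (intro sum.cong refl, simp)
  moreover have "(\<Sum>i\<in>W. \<Sum>j\<in>W. y i * M i j * x j) = (\<Sum>i\<in>W. y i * (\<Sum>j\<in>W. M i j * x j))"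
    by (simp add: sum_distrib_left mult.assoc)
  ultimately show ?thesis by simp
qed

lemma psd_on_quadratic_form_zero_imp_kernel:
  fixes x :: "'v \<Rightarrow> real"
  assumes fin: "finite W" and sym: "\<forall>i\<in>W. \<forall>j\<in>W. M i j = M j i" and psd: "psd_on W M"
    and zero: "(\<Sum>i\<in>W. \<Sum>j\<in>W. x i * M i j * x j) = 0"
  shows "\<forall>i\<in>W. (\<Sum>j\<in>W. M i j * x j) = 0"
proof -
  define y where "y i = (\<Sum>j\<in>W. M i j * x j)" for i
  \<comment> \<open>perturbing x in the direction M x changes the form by 2 t |M x|^2 + O(t^2)\<close>
  have "0 \<le> 2 * (\<Sum>i\<in>W. y i * y i) * t + (\<Sum>i\<in>W. \<Sum>j\<in>W. y i * M i j * y j) * t\<^sup>2" for t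
    using psd[unfolded psd_on_def, rule_format, of "\<lambda>i. x i + t * y i"]
    by (simp add: quadratic_form_add_scaled[OF sym] zero y_def)
  then have "2 * (\<Sum>i\<in>W. y i * y i) = 0" by (rule nonneg_quadratic_linear_coeff_zero)
  then have "\<forall>i\<in>W. y i * y i = 0" using fin by (simp add: sum_nonneg_eq_0_iff)
  then show ?thesis by (simp add: y_def)
qed

lemma sum_extend_zero_row:
  fixes f :: "'v \<Rightarrow> 'a::real_vector"
  assumes "finite V" and "W \<subseteq> V"
  shows "(\<Sum>j\<in>V. extend_zero W M i j *\<^sub>R f j) = (if i \<in> W then \<Sum>j\<in>W. M i j *\<^sub>R f j else 0)"
proof -
  have "(\<Sum>j\<in>V. extend_zero W M i j *\<^sub>R f j) = (\<Sum>j\<in>V. if j \<in> W then (if i \<in> W then M i j *\<^sub>R f j else 0) else 0)"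
    by (intro sum.cong refl) (simp add: extend_zero_def)
  also have "\<dots> = (\<Sum>j\<in>W. if i \<in> W then M i j *\<^sub>R f j else 0)"
    using assms by (simp add: sum.inter_restrict[symmetric] Int_absorb1)
  finally show ?thesis by simp
qed

lemma sum_extend_zero_row_real:
  fixes x :: "'v \<Rightarrow> real"
  assumes "finite V" and "W \<subseteq> V"
  shows "(\<Sum>j\<in>V. extend_zero W M i j * x j) = (if i \<in> W then \<Sum>j\<in>W. M i j * x j else 0)"
  using sum_extend_zero_row[OF assms, of M i x] by simp

lemma quadratic_form_extend_zero:
  fixes x :: "'v \<Rightarrow> real"
  assumes "finite V" and "W \<subseteq> V"
  shows "(\<Sum>i\<in>V. \<Sum>j\<in>V. x i * extend_zero W M i j * x j) = (\<Sum>i\<in>W. \<Sum>j\<in>W. x i * M i j * x j)"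
proof -
  have "(\<Sum>i\<in>V. \<Sum>j\<in>V. x i * extend_zero W M i j * x j) = (\<Sum>i\<in>V. x i * (\<Sum>j\<in>V. extend_zero W M i j * x j))"
    by (simp add: sum_distrib_left mult.assoc)
  also have "\<dots> = (\<Sum>i\<in>V. if i \<in> W then x i * (\<Sum>j\<in>W. M i j * x j) else 0)"
    by (intro sum.cong refl) (simp add: sum_extend_zero_row_real[OF assms])
  also have "\<dots> = (\<Sum>i\<in>W. x i * (\<Sum>j\<in>W. M i j * x j))"
    using assms by (simp add: sum.inter_restrict[symmetric] Int_absorb1)
  finally show ?thesis by (simp add: sum_distrib_left mult.assoc)
qed

lemma is_stress_matrix_extend_zero:
  assumes st: "is_stress_matrix W E p M" and "finite V" and "W \<subseteq> V"
  shows "is_stress_matrix V E p (extend_zero W M)"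
  unfolding is_stress_matrix_def
proof (intro conjI ballI impI)
  fix i j assume "i \<in> V" "j \<in> V"
  show "extend_zero W M i j = extend_zero W M j i"
    using st unfolding is_stress_matrix_def extend_zero_def by auto
next
  fix i j assume "i \<in> V" "j \<in> V" "i \<noteq> j \<and> {i, j} \<notin> E"
  then show "extend_zero W M i j = 0"
    using st unfolding is_stress_matrix_def extend_zero_def by auto
next
  fix i assume "i \<in> V"
  have "(\<Sum>j\<in>W. M i j) = 0" if "i \<in> W"
    using st that unfolding is_stress_matrix_def by blast
  then show "(\<Sum>j\<in>V. extend_zero W M i j) = 0"
    using sum_extend_zero_row_real[OF assms(2,3), of M i "\<lambda>_. 1"] by simp
next
  fix i assume "i \<in> V"
  have "(\<Sum>j\<in>W. M i j *\<^sub>R p j) = 0" if "i \<in> W"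
    using st that unfolding is_stress_matrix_def by blast
  then show "(\<Sum>j\<in>V. extend_zero W M i j *\<^sub>R p j) = 0"
    by (simp add: sum_extend_zero_row[OF assms(2,3)])
qed

lemma is_stress_matrix_add:
  assumes "is_stress_matrix V E p M" and "is_stress_matrix V E' p M'"
  shows "is_stress_matrix V (E \<union> E') p (\<lambda>i j. M i j + M' i j)"
  using assms unfolding is_stress_matrix_def
  by (simp add: sum.distrib scaleR_add_left)

lemma psd_on_extend_zero:
  assumes "finite V" and "W \<subseteq> V" and "psd_on W M"
  shows "psd_on V (extend_zero W M)"
  using assms unfolding psd_on_def by (simp add: quadratic_form_extend_zero)

lemma psd_on_add:
  assumes "psd_on V M" and "psd_on V M'"
  shows "psd_on V (\<lambda>i j. M i j + M' i j)"
  using assms unfolding psd_on_def by (simp add: algebra_simps sum.distrib add_nonneg_nonneg)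

lemma kernel_on_add_psd:
  assumes fin: "finite V"
    and sym: "\<forall>i\<in>V. \<forall>j\<in>V. M i j = M j i" and sym': "\<forall>i\<in>V. \<forall>j\<in>V. M' i j = M' j i"
    and psd: "psd_on V M" and psd': "psd_on V M'"
  shows "kernel_on V (\<lambda>i j. M i j + M' i j) = kernel_on V M \<inter> kernel_on V M'"
proof
  show "kernel_on V M \<inter> kernel_on V M' \<subseteq> kernel_on V (\<lambda>i j. M i j + M' i j)"
    by (auto simp: kernel_on_def algebra_simps sum.distrib)
next
  show "kernel_on V (\<lambda>i j. M i j + M' i j) \<subseteq> kernel_on V M \<inter> kernel_on V M'"
  proof
    fix x assume x: "x \<in> kernel_on V (\<lambda>i j. M i j + M' i j)"
    define Q where "Q N = (\<Sum>i\<in>V. \<Sum>j\<in>V. x $ i * N i j * x $ j)" for N :: "'a \<Rightarrow> 'a \<Rightarrow> real"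
    have "Q (\<lambda>i j. M i j + M' i j) = (\<Sum>i\<in>V. x $ i * (\<Sum>j\<in>V. (M i j + M' i j) * x $ j))"
      by (simp add: Q_def sum_distrib_left mult.assoc)
    also have "\<dots> = 0"
      using x by (simp add: kernel_on_def)
    finally have "Q M + Q M' = 0"
      by (simp add: Q_def algebra_simps sum.distrib)
    moreover have "Q M \<ge> 0" and "Q M' \<ge> 0"
      using psd psd' by (simp_all add: Q_def psd_on_def)
    ultimately have "Q M = 0" and "Q M' = 0" by linarith+
    then have "\<forall>i\<in>V. (\<Sum>j\<in>V. M i j * x $ j) = 0" and "\<forall>i\<in>V. (\<Sum>j\<in>V. M' i j * x $ j) = 0"
      using psd_on_quadratic_form_zero_imp_kernel[OF fin sym psd]
        psd_on_quadratic_form_zero_imp_kernel[OF fin sym' psd'] unfolding Q_def by blast+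
    with x show "x \<in> kernel_on V M \<inter> kernel_on V M'"
      by (simp add: kernel_on_def)
  qed
qed

lemma kernel_on_extend_zero_iff:
  assumes "finite V" and "W \<subseteq> V"
  shows "x \<in> kernel_on V (extend_zero W M) \<longleftrightarrow>
    (\<forall>i. i \<notin> V \<longrightarrow> x $ i = 0) \<and> (\<chi> i. if i \<in> W then x $ i else 0) \<in> kernel_on W M"
proof -
  have "(\<Sum>j\<in>W. M i j * (\<chi> i. if i \<in> W then x $ i else 0) $ j) = (\<Sum>j\<in>W. M i j * x $ j)" for i
    by (intro sum.cong) auto
  then show ?thesis
    using assms by (auto simp: kernel_on_def sum_extend_zero_row_real)
qed

lemma restriction_in_range_affine_values_iff:
  "(\<chi> i. if i \<in> W then x $ i else 0) \<in> range (affine_values W p) \<longleftrightarrow>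
    (\<exists>z. \<forall>i\<in>W. x $ i = fst z \<bullet> p i + snd z)"
proof
  assume "(\<chi> i. if i \<in> W then x $ i else 0) \<in> range (affine_values W p)"
  then obtain z where z: "(\<chi> i. if i \<in> W then x $ i else 0) = affine_values W p z" by blast
  have "x $ i = fst z \<bullet> p i + snd z" if "i \<in> W" for i
    using arg_cong[OF z, of "\<lambda>v. v $ i"] that by (simp add: affine_values_def)
  then show "\<exists>z. \<forall>i\<in>W. x $ i = fst z \<bullet> p i + snd z" by blast
next
  assume "\<exists>z. \<forall>i\<in>W. x $ i = fst z \<bullet> p i + snd z"
  then obtain z where "\<forall>i\<in>W. x $ i = fst z \<bullet> p i + snd z" by blast
  then have "(\<chi> i. if i \<in> W then x $ i else 0) = affine_values W p z"
    by (simp add: affine_values_def vec_eq_iff)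
  then show "(\<chi> i. if i \<in> W then x $ i else 0) \<in> range (affine_values W p)" by blast
qed

lemma kernel_on_extend_zero_Int:
  assumes fin: "finite VA" "finite VB"
    and S: "S \<subseteq> VA \<inter> VB" and hull: "affine hull (p ` S) = UNIV"
    and kA: "kernel_on VA MA = range (affine_values VA p)"
    and kB: "kernel_on VB MB = range (affine_values VB p)"
  shows "kernel_on (VA \<union> VB) (extend_zero VA MA) \<inter> kernel_on (VA \<union> VB) (extend_zero VB MB) =
    range (affine_values (VA \<union> VB) p)"
    (is "?K = _")
proof -
  have "x \<in> ?K \<longleftrightarrow> x \<in> range (affine_values (VA \<union> VB) p)" for x
  proof
    assume "x \<in> ?K"
    then have supp: "\<forall>i. i \<notin> VA \<union> VB \<longrightarrow> x $ i = 0"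
      and "\<exists>zA. \<forall>i\<in>VA. x $ i = fst zA \<bullet> p i + snd zA"
      and "\<exists>zB. \<forall>i\<in>VB. x $ i = fst zB \<bullet> p i + snd zB"
      using fin by (simp_all add: kernel_on_extend_zero_iff kA kB restriction_in_range_affine_values_iff)
    then obtain zA zB where zA: "\<forall>i\<in>VA. x $ i = fst zA \<bullet> p i + snd zA"
      and zB: "\<forall>i\<in>VB. x $ i = fst zB \<bullet> p i + snd zB"
      by blast
    have "zA = zB"
      using S zA zB by (intro affine_coefficients_unique[OF hull]) (metis IntD1 IntD2 subsetD)
    then have "x = affine_values (VA \<union> VB) p zA"
      using supp zA zB by (auto simp: affine_values_def vec_eq_iff)
    then show "x \<in> range (affine_values (VA \<union> VB) p)" by blast
  next
    assume "x \<in> range (affine_values (VA \<union> VB) p)"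
    then obtain z where "x = affine_values (VA \<union> VB) p z" by blast
    then have "\<forall>i. i \<notin> VA \<union> VB \<longrightarrow> x $ i = 0"
      and "\<forall>i\<in>VA \<union> VB. x $ i = fst z \<bullet> p i + snd z"
      by (simp_all add: affine_values_def)
    then show "x \<in> ?K"
      using fin by (auto simp: kernel_on_extend_zero_iff kA kB restriction_in_range_affine_values_iff)
  qed
  then show ?thesis by blast
qed

lemma kernel_on_attachment:
  fixes p :: "'v::finite \<Rightarrow> real^'d"
  assumes fin: "finite VA" "finite VB"
    and stA: "is_stress_matrix VA EA p MA" and psdA: "psd_on VA MA"
    and nA: "nullity_on VA MA = CARD('d) + 1"
    and stB: "is_stress_matrix VB EB p MB" and psdB: "psd_on VB MB"
    and nB: "nullity_on VB MB = CARD('d) + 1"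
    and S: "S \<subseteq> VA \<inter> VB" and hull: "affine hull (p ` S) = UNIV"
  shows "kernel_on (VA \<union> VB) (\<lambda>i j. extend_zero VA MA i j + extend_zero VB MB i j) =
    range (affine_values (VA \<union> VB) p)"
proof -
  have finV: "finite (VA \<union> VB)" using fin by simp
  have "kernel_on VA MA = range (affine_values VA p)" and "kernel_on VB MB = range (affine_values VB p)"
    using kernel_on_eq_range_affine_values[OF stA nA _ hull] kernel_on_eq_range_affine_values[OF stB nB _ hull] S
    by auto
  moreover have "is_stress_matrix (VA \<union> VB) EA p (extend_zero VA MA)"
    and "is_stress_matrix (VA \<union> VB) EB p (extend_zero VB MB)"
    using is_stress_matrix_extend_zero[OF stA finV] is_stress_matrix_extend_zero[OF stB finV] by auto
  moreover have "psd_on (VA \<union> VB) (extend_zero VA MA)" and "psd_on (VA \<union> VB) (extend_zero VB MB)"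
    using psd_on_extend_zero[OF finV _ psdA] psd_on_extend_zero[OF finV _ psdB] by auto
  ultimately show ?thesis
    using kernel_on_add_psd[OF finV] kernel_on_extend_zero_Int[OF fin S hull]
    by (simp add: is_stress_matrix_symmetric)
qed

theorem theorem6:
  fixes VA VB :: "'v::finite set"
    and EA EB :: "'v set set"
    and pA pB :: "'v \<Rightarrow> real^'d"
    and \<Omega>A \<Omega>B :: "'v \<Rightarrow> 'v \<Rightarrow> real"
  assumes gA: "is_graph VA EA" and gB: "is_graph VB EB"
    and genA: "general_position VA pA" and genB: "general_position VB pB"
    and propA: "VA \<inter> VB \<subset> VA" and propB: "VA \<inter> VB \<subset> VB"
    and ncard: "card (VA \<inter> VB) \<ge> CARD('d) + 1"
    and agree: "\<forall>i\<in>VA \<inter> VB. pA i = pB i"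
    and stA: "is_stress_matrix VA EA pA \<Omega>A" and psdA: "psd_on VA \<Omega>A"
    and nA: "nullity_on VA \<Omega>A = CARD('d) + 1"
    and stB: "is_stress_matrix VB EB pB \<Omega>B" and psdB: "psd_on VB \<Omega>B"
    and nB: "nullity_on VB \<Omega>B = CARD('d) + 1"
  shows "let V = VA \<union> VB;
             p = (\<lambda>i. if i \<in> VA then pA i else pB i);
             \<Omega> = (\<lambda>i j. extend_zero VA \<Omega>A i j + extend_zero VB \<Omega>B i j)
         in is_stress_matrix V (EA \<union> EB) p \<Omega> \<and> psd_on V \<Omega> \<and>
            nullity_on V \<Omega> = CARD('d) + 1"
proof -
  define p where "p = (\<lambda>i. if i \<in> VA then pA i else pB i)"
  have finA: "finite VA" and finB: "finite VB" and finV: "finite (VA \<union> VB)"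
    using gA gB by (auto simp: is_graph_def)
  have pA: "\<forall>i\<in>VA. p i = pA i" and pB: "\<forall>i\<in>VB. p i = pB i"
    using agree by (auto simp: p_def)
  have stA': "is_stress_matrix VA EA p \<Omega>A" and stB': "is_stress_matrix VB EB p \<Omega>B"
    and genA': "general_position VA p"
    using is_stress_matrix_cong[OF pA] is_stress_matrix_cong[OF pB] general_position_cong[OF pA]
      stA stB genA by blast+
  obtain S where S: "S \<subseteq> VA \<inter> VB" and cardS: "card S = CARD('d) + 1"
    using obtain_subset_with_card_n[OF ncard] by metis
  then have hull: "affine hull (p ` S) = UNIV"
    using general_position_affine_hull_eq_UNIV[OF genA'] by blast
  have "is_stress_matrix (VA \<union> VB) (EA \<union> EB) p (\<lambda>i j. extend_zero VA \<Omega>A i j + extend_zero VB \<Omega>B i j)"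
    using is_stress_matrix_extend_zero[OF stA' finV] is_stress_matrix_extend_zero[OF stB' finV]
    by (intro is_stress_matrix_add) auto
  moreover have "psd_on (VA \<union> VB) (\<lambda>i j. extend_zero VA \<Omega>A i j + extend_zero VB \<Omega>B i j)"
    using psd_on_extend_zero[OF finV _ psdA] psd_on_extend_zero[OF finV _ psdB]
    by (intro psd_on_add) auto
  moreover have "nullity_on (VA \<union> VB) (\<lambda>i j. extend_zero VA \<Omega>A i j + extend_zero VB \<Omega>B i j) = CARD('d) + 1"
    using kernel_on_attachment[OF finA finB stA' psdA nA stB' psdB nB S hull]
      dim_range_affine_values[of S "VA \<union> VB" p] S hull
    by (auto simp: nullity_on_def)
  ultimately show ?thesis
    by (simp add: p_def)
qed

end
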